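(* Let $q$ be a power of an odd prime $p\neq 3$ with $3\mid q-1$, let $\tau\in\mathbb{F}_q\setminus\{0,1/4,-1/50\}$, and let $\mathfrak{C}/\mathbb{F}_q$ be the genus $2$ curve $y^2=x^6+x^3+\tau$ with function field $F$ and $N=\#\mathbb{P}^1_F$ rational places. Then for all integers $t,\ell$ with $1\le t<\ell\le\lfloor N/3\rfloor-1$ there exists a $q$-ary linear locally repairable code with locality $2$ and parameters $$[\,n=3\ell,\ k=2t+1,\ d\ge n-3t-1\,]_q$$ whose Singleton-optimal defect is at most $1$.
   Context: $\mathbb{P}^1_F$ is the set of rational (degree one) places of the function field $F=\mathbb{F}_q(x,y)$. A code $\mathcal{C}\subseteq\mathbb{F}_q^n$ has locality $r$ if for every coordinate $i$ there is a set $I_i\subseteq\{1,\dots,n\}\setminus\{i\}$ with $|I_i|=r$ such that for $a\ne a'$ in $\mathbb{F}_q$ the restrictions to $I_i$ of $\{c\in\mathcal{C}:c_i=a\}$ and $\{c\in\mathcal{C}:c_i=a'\}$ are disjoint. For an $[n,k,d]_q$ code with locality $r$ the Singleton-optimal defect is $\Delta=n-k-\lceil k/r\rceil+2-d\ge0$; optimal means $\Delta=0$, almost optimal means $\Delta=1$. *)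

theory Defs
  imports Complex_Main "HOL-Library.Function_Algebras" "HOL-Computational_Algebra.Primes"
begin

text \<open>Vectors of \<open>F_q^n\<close> are represented as functions \<open>nat \<Rightarrow> 'a\<close> that vanish
  outside the coordinate set \<open>{..<n}\<close>.\<close>

definition coord_scale :: "'a::field \<Rightarrow> (nat \<Rightarrow> 'a) \<Rightarrow> (nat \<Rightarrow> 'a)" where
  "coord_scale c v = (\<lambda>i. c * v i)"

definition ambient :: "nat \<Rightarrow> (nat \<Rightarrow> 'a::zero) set" where
  "ambient n = {v. \<forall>i. n \<le> i \<longrightarrow> v i = 0}"

definition linear_code :: "nat \<Rightarrow> (nat \<Rightarrow> 'a::field) set \<Rightarrow> bool" where
  "linear_code n C \<longleftrightarrow> C \<subseteq> ambient n \<and> module.subspace coord_scale C"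

definition code_dim :: "(nat \<Rightarrow> 'a::field) set \<Rightarrow> nat" where
  "code_dim C = vector_space.dim coord_scale C"

definition hamming_weight :: "nat \<Rightarrow> (nat \<Rightarrow> 'a::zero) \<Rightarrow> nat" where
  "hamming_weight n v = card {i. i < n \<and> v i \<noteq> 0}"

definition min_dist :: "nat \<Rightarrow> (nat \<Rightarrow> 'a::field) set \<Rightarrow> nat" where
  "min_dist n C = Min {hamming_weight n c | c. c \<in> C \<and> c \<noteq> 0}"

definition restr :: "nat set \<Rightarrow> (nat \<Rightarrow> 'a::zero) \<Rightarrow> (nat \<Rightarrow> 'a)" where
  "restr I c = (\<lambda>j. if j \<in> I then c j else 0)"

definition has_locality :: "nat \<Rightarrow> (nat \<Rightarrow> 'a::field) set \<Rightarrow> nat \<Rightarrow> bool" where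
  "has_locality n C r \<longleftrightarrow>
     (\<forall>i<n. \<exists>I. I \<subseteq> {..<n} - {i} \<and> card I = r \<and>
        (\<forall>a a'. a \<noteq> a' \<longrightarrow>
           restr I ` {c\<in>C. c i = a} \<inter> restr I ` {c\<in>C. c i = a'} = {}))"

definition singleton_defect :: "nat \<Rightarrow> nat \<Rightarrow> nat \<Rightarrow> nat \<Rightarrow> int" where
  "singleton_defect n k d r = int n - int k - \<lceil>rat_of_nat k / rat_of_nat r\<rceil> + 2 - int d"

text \<open>Number of rational places of the function field \<open>F_q(x,y)\<close>, \<open>y^2 = x^6+x^3+\<tau>\<close>
  (q odd, \<open>\<tau> \<noteq> 0, 1/4\<close>, so the sextic is squarefree and the curve has genus 2):
  over each \<open>a \<in> F_q\<close> the rational places correspond to the solutions \<open>b\<close> of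
  \<open>b^2 = a^6+a^3+\<tau>\<close> (one place if the right side is 0, two if a nonzero square, none
  otherwise), and since the degree is even with square leading coefficient 1,
  there are exactly two rational places at infinity.\<close>
definition num_rat_places :: "'a::{field,finite} \<Rightarrow> nat" where
  "num_rat_places \<tau> = card {(a,b). b^2 = a^6 + a^3 + \<tau>} + 2"

end

(* The function s = y + x^3 on the curve satisfies x^3 (2s + 1) = s^2 - \<tau>, so F is a cyclic
   cubic extension of the rational function field F_q(s). A point (u, b) of the conic
   b^2 = u^2 + u + \<tau> with u a nonzero cube gives three rational places of F over s = b + u,
   whose x-coordinates are the three cube roots of u, and counting shows that there are at
   least l such fibres. The code evaluates the functions A(s) + x B(s), deg A \<le> t, deg B < t,
   at these 3l places. On a fibre a codeword is an affine function of x, so each coordinate is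
   determined by the other two of its fibre: locality 2. A zero of A(s) + x B(s) over s_j makes
   s_j a root of the norm (2s + 1) A^3 + (s^2 - \<tau>) B^3, of multiplicity at least 3 if there
   are two zeros in the fibre (then A(s_j) = B(s_j) = 0). As this polynomial is nonzero of
   degree at most 3t + 1, a nonzero codeword has at most 3t + 1 zeros. *)

theory Submission
  imports Defs "HOL-Computational_Algebra.Polynomial" "HOL-Number_Theory.Residues"
begin

hide_const (open) UnivPoly.coeff UnivPoly.monom Coset.order module.smult

interpretation coords: vector_space coord_scale
  by unfold_locales (auto simp: coord_scale_def algebra_simps)

section \<open>Linear codes\<close>

lemma sum_fun_apply: "(\<Sum>k\<in>K. f k) x = (\<Sum>k\<in>K. f k x)"
  by (induction K rule: infinite_finite_induct) auto

lemma (in vector_space) independent_image_if_combinations_vanish: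
  assumes "finite K" and vanish: "\<And>w. (\<Sum>k\<in>K. w k *s e k) = 0 \<Longrightarrow> \<forall>k\<in>K. w k = 0"
  shows "independent (e ` K)" and "inj_on e K"
proof -
  show inj: "inj_on e K"
  proof (rule inj_onI, rule ccontr)
    fix k k' assume k: "k \<in> K" "k' \<in> K" and "e k = e k'" "k \<noteq> k'"
    define w :: "_ \<Rightarrow> 'a" where "w j = (if j = k then 1 else 0) - (if j = k' then 1 else 0)" for j
    have "(\<Sum>j\<in>K. w j *s e j) =
        (\<Sum>j\<in>K. (if j = k then 1 else 0) *s e j) - (\<Sum>j\<in>K. (if j = k' then 1 else 0) *s e j)"
      by (simp add: w_def scale_left_diff_distrib sum_subtractf)
    also have "\<dots> = e k - e k'"
      using \<open>finite K\<close> k by (simp add: if_distrib[of "\<lambda>a. a *s _"] cong: if_cong)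
    finally have "(\<Sum>j\<in>K. w j *s e j) = 0" using \<open>e k = e k'\<close> by simp
    with vanish have "w k = 0" using k by blast
    with \<open>k \<noteq> k'\<close> show False by (simp add: w_def)
  qed
  show "independent (e ` K)"
    using \<open>finite K\<close> vanish[of "\<lambda>k. _ (e k)"] by (auto simp: dependent_finite sum.reindex[OF inj])
qed

lemma has_localityI:
  assumes subspace: "module.subspace coord_scale C"
    and repair: "\<And>i. i < n \<Longrightarrow> \<exists>I. I \<subseteq> {..<n} - {i} \<and> card I = r \<and>
                     (\<forall>c\<in>C. (\<forall>j\<in>I. c j = 0) \<longrightarrow> c i = 0)"
  shows "has_locality n C r"
  unfolding has_locality_def
proof (intro allI impI)
  fix i assume "i < n"
  then obtain I where I: "I \<subseteq> {..<n} - {i}" "card I = r"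
    and rep: "\<forall>c\<in>C. (\<forall>j\<in>I. c j = 0) \<longrightarrow> c i = 0"
    using repair by blast
  have "restr I ` {c\<in>C. c i = a} \<inter> restr I ` {c\<in>C. c i = a'} = {}" if "a \<noteq> a'" for a a'
  proof (rule ccontr)
    assume "\<not> ?thesis"
    then obtain c c' where c: "c \<in> C" "c' \<in> C" "c i = a" "c' i = a'"
      and agree: "restr I c = restr I c'"
      by blast
    have "(c - c') j = 0" if "j \<in> I" for j
      using fun_cong[OF agree, of j] that by (simp add: restr_def)
    moreover have "c - c' \<in> C"
      using coords.subspace_diff[OF subspace c(1,2)] .
    ultimately have "(c - c') i = 0"
      using rep by blast
    with c \<open>a \<noteq> a'\<close> show False by simp
  qed
  with I show "\<exists>I. I \<subseteq> {..<n} - {i} \<and> card I = r \<and>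
      (\<forall>a a'. a \<noteq> a' \<longrightarrow> restr I ` {c\<in>C. c i = a} \<inter> restr I ` {c\<in>C. c i = a'} = {})"
    by blast
qed

lemma hamming_weight_add_card_zeros: "hamming_weight n c + card {i. i < n \<and> c i = 0} = n"
proof -
  have "hamming_weight n c + card {i. i < n \<and> c i = 0} =
      card ({i. i < n \<and> c i \<noteq> 0} \<union> {i. i < n \<and> c i = 0})"
    unfolding hamming_weight_def by (rule card_Un_disjoint [symmetric]) auto
  also have "{i. i < n \<and> c i \<noteq> 0} \<union> {i. i < n \<and> c i = 0} = {..<n}"
    by auto
  finally show ?thesis by simp
qed

lemma le_min_distI:
  assumes "c \<in> C" "c \<noteq> 0" and "\<And>c. c \<in> C \<Longrightarrow> c \<noteq> 0 \<Longrightarrow> d \<le> hamming_weight n c"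
  shows "d \<le> min_dist n C"
proof -
  have "hamming_weight n c \<le> n" for c
    using hamming_weight_add_card_zeros[of n c] by linarith
  then have "{hamming_weight n c | c. c \<in> C \<and> c \<noteq> 0} \<subseteq> {..n}"
    by auto
  then have "finite {hamming_weight n c | c. c \<in> C \<and> c \<noteq> 0}"
    by (rule finite_subset) simp
  with assms show ?thesis
    unfolding min_dist_def by (subst Min_ge_iff) blast+
qed

lemma singleton_defect_le_one:
  assumes "n \<le> d + 3*t + 1"
  shows "singleton_defect n (2*t+1) d 2 \<le> 1"
proof -
  have "\<lceil>rat_of_nat (2*t+1) / rat_of_nat 2\<rceil> = int t + 1"
    by (rule ceiling_unique) (simp_all add: field_simps)
  with assms show ?thesis
    unfolding singleton_defect_def by linarith
qed

section \<open>Polynomials and finite fields\<close>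

lemma card_roots_of_power_le:
  fixes c :: "'a::idom"
  assumes "0 < n"
  shows "card {x. x ^ n = c} \<le> n"
proof -
  have degree: "degree ([:-c:] + monom 1 n) = n"
    using assms by (simp add: degree_add_eq_right degree_monom_eq)
  have "{x. x ^ n = c} = {x. poly ([:-c:] + monom 1 n) x = 0}"
    by (auto simp: poly_monom)
  also have "card \<dots> \<le> n"
    using assms degree card_poly_roots_bound[of "[:-c:] + monom 1 n"] by fastforce
  finally show ?thesis .
qed

lemma sum_order_le_degree':
  fixes p :: "'a::idom poly"
  assumes "p \<noteq> 0"
  shows "(\<Sum>x\<in>S. order x p) \<le> degree p"
proof (cases "finite S")
  case True
  have "(\<Sum>x\<in>S. order x p) = (\<Sum>x\<in>S \<inter> {x. poly p x = 0}. order x p)"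
    using True by (intro sum.mono_neutral_right) (auto simp: order_root)
  also have "\<dots> \<le> (\<Sum>x | poly p x = 0. order x p)"
    using assms by (intro sum_mono2 poly_roots_finite) auto
  also have "\<dots> \<le> degree p"
    using assms by (rule sum_order_le_degree)
  finally show ?thesis .
qed simp

lemma power_card_minus_one_eq_one:
  fixes x :: "'a::{field,finite}"
  assumes "x \<noteq> 0"
  shows "x ^ (card (UNIV :: 'a set) - 1) = 1"
proof -
  have "(\<Prod>y\<in>UNIV-{0}. x * y) = x ^ (card (UNIV :: 'a set) - 1) * \<Prod>(UNIV-{0::'a})"
    by (simp add: prod.distrib card_Diff_subset)
  moreover have "(\<Prod>y\<in>UNIV-{0}. x * y) = \<Prod>(UNIV-{0::'a})"
    by (rule prod.reindex_bij_witness[of _ "\<lambda>y. y / x" "\<lambda>y. x * y"]) (use assms in auto)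
  moreover have "\<Prod>(UNIV-{0::'a}) \<noteq> 0" by simp
  ultimately show ?thesis by simp
qed

lemma ex_nontrivial_root_of_unity:
  assumes "d dvd card (UNIV :: 'a::{field,finite} set) - 1" and "1 < d"
  shows "\<exists>\<omega>::'a. \<omega> \<noteq> 1 \<and> \<omega> ^ d = 1"
proof -
  define q where "q = card (UNIV :: 'a set)"
  obtain k where k: "q - 1 = d * k" using assms(1) unfolding q_def by blast
  have "card {0::'a, 1} \<le> q" unfolding q_def by (intro card_mono) auto
  then have "2 \<le> q" by simp
  with k have "0 < k"
    by (cases k) auto
  then have "k < q - 1"
    using mult_less_mono1[OF assms(2)] k by fastforce
  have "\<exists>y::'a. y \<noteq> 0 \<and> y ^ k \<noteq> 1"
  proof (rule ccontr)
    assume "\<not> ?thesis"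
    then have "UNIV - {0} \<subseteq> {y::'a. y ^ k = 1}" by auto
    then have "q - 1 \<le> card {y::'a. y ^ k = 1}"
      unfolding q_def by (metis card_Diff_singleton card_mono finite UNIV_I)
    with card_roots_of_power_le[OF \<open>0 < k\<close>, of "1::'a"] \<open>k < q - 1\<close> show False by linarith
  qed
  then obtain y :: 'a where "y \<noteq> 0" "y ^ k \<noteq> 1" by blast
  moreover have "(y ^ k) ^ d = 1"
    using power_card_minus_one_eq_one[OF \<open>y \<noteq> 0\<close>] k
    by (simp add: q_def mult.commute flip: power_mult)
  ultimately show ?thesis by blast
qed

lemma inj_on_power_cube_root_of_unity:
  fixes \<omega> :: "'a::idom"
  assumes "\<omega> \<noteq> 1" and "\<omega> ^ 3 = 1"
  shows "inj_on (\<lambda>i. \<omega> ^ i) {..<3}"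
proof -
  have "\<omega> \<noteq> 0" using assms by auto
  have "\<omega> ^ 3 = \<omega> ^ 2 * \<omega>"
    by (simp add: power3_eq_cube power2_eq_square)
  then have "\<omega> ^ 2 \<noteq> 1"
    using assms by auto
  moreover have "\<omega> ^ 2 \<noteq> \<omega>"
    using assms \<open>\<omega> \<noteq> 0\<close> by (simp add: power2_eq_square)
  ultimately show ?thesis
    using assms(1) by (auto simp: inj_on_def less_Suc_eq numeral_3_eq_3 numeral_2_eq_2 dest: sym)
qed

lemma two_neq_zero_if_odd_card:
  assumes "odd (card (UNIV :: 'a::{ring_1,finite} set))"
  shows "(2::'a) \<noteq> 0"
proof
  assume "(2::'a) = 0"
  then have "CHAR('a) dvd 2"
    by (metis of_nat_eq_0_iff_char_dvd of_nat_numeral)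
  moreover have "odd CHAR('a)"
    using assms CHAR_dvd_CARD by (metis dvd_trans)
  ultimately have "CHAR('a) = 1"
    using dvd_imp_le[of "CHAR('a)" 2] by (cases "CHAR('a)") (auto simp: le_Suc_eq)
  then show False by simp
qed

section \<open>Points of the curve\<close>

definition cube_conic_points :: "'a::field \<Rightarrow> ('a \<times> 'a) set" where
  "cube_conic_points \<tau> = {(u, b). u \<noteq> 0 \<and> (\<exists>a. a ^ 3 = u) \<and> b ^ 2 = u ^ 2 + u + \<tau>}"

lemma num_rat_places_le:
  fixes \<tau> :: "'a::{field,finite}"
  shows "num_rat_places \<tau> \<le> 3 * card (cube_conic_points \<tau>) + 4"
proof -
  define T where "T = cube_conic_points \<tau>"
  define over_zero where "over_zero = {0::'a} \<times> {b. b ^ 2 = \<tau>}"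
  define over_T where "over_T = (\<Union>p\<in>T. {a. a ^ 3 = fst p} \<times> {snd p})"
  have "(a, b) \<in> over_zero \<union> over_T" if "b ^ 2 = a ^ 6 + a ^ 3 + \<tau>" for a b
  proof (cases "a = 0")
    case True
    with that show ?thesis by (simp add: over_zero_def)
  next
    case False
    with that have "(a ^ 3, b) \<in> T"
      by (auto simp: T_def cube_conic_points_def simp flip: power_mult)
    then show ?thesis by (force simp: over_T_def)
  qed
  then have "card {(a, b). b ^ 2 = a ^ 6 + a ^ 3 + \<tau>} \<le> card (over_zero \<union> over_T)"
    by (intro card_mono) auto
  also have "\<dots> \<le> card over_zero + card over_T"
    by (rule card_Un_le)
  also have "card over_zero \<le> 2"
    using card_roots_of_power_le[of 2 \<tau>]
    by (simp add: over_zero_def card_cartesian_product_singleton)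
  also have "card over_T \<le> (\<Sum>p\<in>T. card ({a. a ^ 3 = fst p} \<times> {snd p}))"
    unfolding over_T_def by (rule card_UN_le) simp
  also have "\<dots> \<le> (\<Sum>p\<in>T. 3)"
    by (intro sum_mono) (auto simp: card_cartesian_product intro: card_roots_of_power_le)
  finally show ?thesis
    by (simp add: num_rat_places_def T_def)
qed

lemma conic_sum_coordinate:
  fixes \<tau> :: "'a::comm_ring_1"
  assumes "b ^ 2 = u ^ 2 + u + \<tau>"
  shows "(b + u) ^ 2 - \<tau> = u * (2 * (b + u) + 1)"
  using assms by (simp add: power2_eq_square algebra_simps)

(* The lines b + u = \<sigma> are parallel to the asymptote b = -u - 1/2 of the conic,
   so each of them meets it at most once. *)
lemma conic_point_eq_if_sum_eq:
  fixes \<tau> :: "'a::field"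
  assumes "(2::'a) \<noteq> 0" and "\<tau> \<noteq> 1/4"
    and on_conic: "b ^ 2 = u ^ 2 + u + \<tau>" "b' ^ 2 = u' ^ 2 + u' + \<tau>"
    and sum_eq: "b + u = b' + u'"
  shows "u = u' \<and> b = b'"
proof -
  define \<sigma> where "\<sigma> = b + u"
  have rel: "\<sigma> ^ 2 - \<tau> = u * (2 * \<sigma> + 1)" "\<sigma> ^ 2 - \<tau> = u' * (2 * \<sigma> + 1)"
    using conic_sum_coordinate[OF on_conic(1)] conic_sum_coordinate[OF on_conic(2)] sum_eq
    by (simp_all add: \<sigma>_def)
  have "2 * \<sigma> + 1 \<noteq> 0"
  proof
    assume "2 * \<sigma> + 1 = 0"
    moreover have "\<sigma> = ((2 * \<sigma> + 1) - 1) / 2"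
      using assms(1) by simp
    ultimately have "\<sigma> = - 1/2"
      by simp
    then have "\<tau> = 1/4"
      using rel(1) \<open>2 * \<sigma> + 1 = 0\<close> by (simp add: power2_eq_square field_simps)
    with assms(2) show False ..
  qed
  with rel have "u = u'" by simp
  with sum_eq show ?thesis by simp
qed

section \<open>The code\<close>

(* Coordinate i is the rational place with s-coordinate s (i div 3) and x-coordinate x i:
   coordinates 3j, 3j + 1, 3j + 2 form the fibre over s j. *)
locale cubic_cover_code =
  fixes \<tau> :: "'a::field" and l t :: nat and s x :: "nat \<Rightarrow> 'a"
  assumes two_neq_zero: "(2::'a) \<noteq> 0"
    and t_pos: "1 \<le> t" and t_less: "t < l"
    and inj_on_s: "inj_on s {..<l}"
    and x_inj_on_fibre:
      "\<And>i i'. i < 3*l \<Longrightarrow> i' < 3*l \<Longrightarrow> i div 3 = i' div 3 \<Longrightarrow> x i = x i' \<Longrightarrow> i = i'"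
    and x_cube: "\<And>i. i < 3*l \<Longrightarrow> x i ^ 3 * (2 * s (i div 3) + 1) = s (i div 3) ^ 2 - \<tau>"
begin

definition eval_word :: "'a poly \<Rightarrow> 'a poly \<Rightarrow> nat \<Rightarrow> 'a" where
  "eval_word A B i = (if i < 3*l then poly A (s (i div 3)) + x i * poly B (s (i div 3)) else 0)"

definition code :: "(nat \<Rightarrow> 'a) set" where
  "code = {eval_word A B | A B. degree A \<le> t \<and> degree B < t}"

(* (2s + 1) times the norm of A(s) + x B(s) down to F_q(s), where x^3 = (s^2 - \<tau>) / (2s + 1) *)
definition norm_poly :: "'a poly \<Rightarrow> 'a poly \<Rightarrow> 'a poly" where
  "norm_poly A B = [:1, 2:] * A ^ 3 + [:-\<tau>, 0, 1:] * B ^ 3"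

lemma eval_word_in_code: "degree A \<le> t \<Longrightarrow> degree B < t \<Longrightarrow> eval_word A B \<in> code"
  by (auto simp: code_def)

lemma eval_word_zero [simp]: "eval_word 0 0 = 0"
  by (simp add: fun_eq_iff eval_word_def)

lemma eval_word_add: "eval_word (A + A') (B + B') = eval_word A B + eval_word A' B'"
  by (simp add: fun_eq_iff eval_word_def algebra_simps)

lemma eval_word_smult: "eval_word (smult c A) (smult c B) = coord_scale c (eval_word A B)"
  by (simp add: fun_eq_iff eval_word_def coord_scale_def algebra_simps)

lemma norm_poly_neq_zero:
  assumes "A \<noteq> 0 \<or> B \<noteq> 0"
  shows "norm_poly A B \<noteq> 0"
proof
  assume "norm_poly A B = 0"
  then have eq: "[:1, 2:] * A ^ 3 = - ([:-\<tau>, 0, 1:] * B ^ 3)"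
    unfolding norm_poly_def by (simp only: eq_neg_iff_add_eq_0)
  have "[:1, 2:] * A ^ 3 = 0 \<longleftrightarrow> A = 0" and "[:-\<tau>, 0, 1:] * B ^ 3 = 0 \<longleftrightarrow> B = 0"
    by (simp_all del: mult_pCons_left)
  with eq assms have "A \<noteq> 0" "B \<noteq> 0"
    by (metis neg_equal_0_iff_equal)+
  then have "degree ([:1, 2:] * A ^ 3) = 1 + 3 * degree A"
    and "degree ([:-\<tau>, 0, 1:] * B ^ 3) = 2 + 3 * degree B"
    using two_neq_zero by (simp_all add: degree_mult_eq degree_power_eq del: mult_pCons_left)
  moreover have "degree ([:1, 2:] * A ^ 3) = degree ([:-\<tau>, 0, 1:] * B ^ 3)"
    using eq by (metis degree_minus)
  ultimately show False by presburger
qed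

lemma degree_norm_poly_le:
  assumes "degree A \<le> t" and "degree B < t"
  shows "degree (norm_poly A B) \<le> 3*t + 1"
proof -
  have "degree ([:1, 2:] * A ^ 3) \<le> 1 + 3 * degree A"
    using degree_mult_le[of "[:1, 2:]" "A ^ 3"] degree_power_le[of A 3] two_neq_zero
    by (simp del: mult_pCons_left)
  moreover have "degree ([:-\<tau>, 0, 1:] * B ^ 3) \<le> 2 + 3 * degree B"
    using degree_mult_le[of "[:-\<tau>, 0, 1:]" "B ^ 3"] degree_power_le[of B 3]
    by (simp del: mult_pCons_left)
  ultimately show ?thesis
    unfolding norm_poly_def using assms by (intro order.trans[OF degree_add_le_max]) linarith
qed

lemma norm_poly_root_if_eval_word_zero:
  assumes "i < 3*l" and "eval_word A B i = 0"
  shows "poly (norm_poly A B) (s (i div 3)) = 0"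
proof -
  define \<sigma> \<xi> where "\<sigma> = s (i div 3)" and "\<xi> = x i"
  have "poly A \<sigma> = - \<xi> * poly B \<sigma>"
    using assms by (simp add: eval_word_def \<sigma>_def \<xi>_def eq_neg_iff_add_eq_0)
  then have "poly (norm_poly A B) \<sigma> = poly B \<sigma> ^ 3 * (\<sigma> ^ 2 - \<tau> - \<xi> ^ 3 * (2 * \<sigma> + 1))"
    by (simp add: norm_poly_def power2_eq_square power3_eq_cube algebra_simps)
  also have "\<dots> = 0"
    using x_cube[OF assms(1)] by (simp add: \<sigma>_def \<xi>_def)
  finally show ?thesis by (simp add: \<sigma>_def)
qed

lemma eval_word_zeros_in_fibre:
  assumes "i < 3*l" "i' < 3*l" "i div 3 = i' div 3" "i \<noteq> i'"
    and "eval_word A B i = 0" "eval_word A B i' = 0"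
  shows "poly A (s (i div 3)) = 0 \<and> poly B (s (i div 3)) = 0"
proof -
  have "x i \<noteq> x i'"
    using x_inj_on_fibre assms(1-4) by blast
  moreover have "(x i - x i') * poly B (s (i div 3)) = eval_word A B i - eval_word A B i'"
    using assms(1-3) by (simp add: eval_word_def algebra_simps)
  ultimately have "poly B (s (i div 3)) = 0"
    using assms(5,6) by simp
  with assms show ?thesis by (simp add: eval_word_def)
qed

lemma card_fibre_zeros_le_one:
  assumes "\<not> (poly A (s j) = 0 \<and> poly B (s j) = 0)"
  shows "card {i. i < 3*l \<and> i div 3 = j \<and> eval_word A B i = 0} \<le> 1"
    (is "card ?Z \<le> _")
proof -
  have "i = i'" if "i \<in> ?Z" "i' \<in> ?Z" for i i'
  proof (rule ccontr)
    assume "i \<noteq> i'"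
    with that have "poly A (s j) = 0 \<and> poly B (s j) = 0"
      using eval_word_zeros_in_fibre[of i i' A B] by simp
    with assms show False ..
  qed
  moreover have "finite ?Z"
    by (rule finite_subset[of _ "{..<3*l}"]) auto
  ultimately show ?thesis
    using card_le_Suc0_iff_eq[of ?Z] by (simp only: One_nat_def) blast
qed

lemma card_fibre_zeros_le_order:
  assumes "j < l" and "A \<noteq> 0 \<or> B \<noteq> 0"
  shows "card {i. i < 3*l \<and> i div 3 = j \<and> eval_word A B i = 0}
           \<le> order (s j) (norm_poly A B)"
    (is "card ?Z \<le> _")
proof -
  have norm_neq_zero: "norm_poly A B \<noteq> 0"
    using assms(2) by (rule norm_poly_neq_zero)
  show ?thesis
  proof (cases "poly A (s j) = 0 \<and> poly B (s j) = 0")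
    case True
    then have "[:-s j, 1:] dvd A" "[:-s j, 1:] dvd B"
      by (simp_all add: poly_eq_0_iff_dvd)
    then have "[:-s j, 1:] ^ 3 dvd norm_poly A B"
      unfolding norm_poly_def by (simp add: dvd_add dvd_mult dvd_power_same del: mult_pCons_left)
    then have "3 \<le> order (s j) (norm_poly A B)"
      using norm_neq_zero order_divides by blast
    moreover have "?Z \<subseteq> {3*j..<3*j+3}"
      by auto
    then have "card ?Z \<le> 3"
      using card_mono[of "{3*j..<3*j+3}" ?Z] by simp
    ultimately show ?thesis by linarith
  next
    case False
    show ?thesis
    proof (cases "?Z = {}")
      case True
      then show ?thesis by (metis card.empty le0)
    next
      case False
      then obtain i where "i \<in> ?Z" by blast
      then have "order (s j) (norm_poly A B) \<noteq> 0"
        using norm_poly_root_if_eval_word_zero[of i A B] norm_neq_zero by (simp add: order_root)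
      with card_fibre_zeros_le_one[OF \<open>\<not> (poly A (s j) = 0 \<and> poly B (s j) = 0)\<close>]
      show ?thesis by linarith
    qed
  qed
qed

lemma card_zeros_le:
  assumes "degree A \<le> t" "degree B < t" and "A \<noteq> 0 \<or> B \<noteq> 0"
  shows "card {i. i < 3*l \<and> eval_word A B i = 0} \<le> 3*t + 1"
proof -
  define Z where "Z j = {i. i < 3*l \<and> i div 3 = j \<and> eval_word A B i = 0}" for j
  have "{i. i < 3*l \<and> eval_word A B i = 0} = (\<Union>j<l. Z j)"
    by (auto simp: Z_def)
  then have "card {i. i < 3*l \<and> eval_word A B i = 0} \<le> (\<Sum>j<l. card (Z j))"
    by (simp add: card_UN_le)
  also have "\<dots> \<le> (\<Sum>j<l. order (s j) (norm_poly A B))"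
    using card_fibre_zeros_le_order assms(3) by (intro sum_mono) (auto simp: Z_def)
  also have "\<dots> = (\<Sum>\<sigma>\<in>s ` {..<l}. order \<sigma> (norm_poly A B))"
    by (simp add: sum.reindex[OF inj_on_s])
  also have "\<dots> \<le> degree (norm_poly A B)"
    using assms(3) by (intro sum_order_le_degree' norm_poly_neq_zero)
  also have "\<dots> \<le> 3*t + 1"
    using assms(1,2) by (rule degree_norm_poly_le)
  finally show ?thesis .
qed

lemma eval_word_eq_zero_iff:
  assumes "degree A \<le> t" and "degree B < t"
  shows "eval_word A B = 0 \<longleftrightarrow> A = 0 \<and> B = 0"
proof
  assume "eval_word A B = 0"
  then have "{i. i < 3*l \<and> eval_word A B i = 0} = {..<3*l}" by auto
  with card_zeros_le[OF assms] t_less show "A = 0 \<and> B = 0" by fastforce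
qed (simp add: fun_eq_iff eval_word_def)

lemma hamming_weight_eval_word_ge:
  assumes "degree A \<le> t" "degree B < t" and "eval_word A B \<noteq> 0"
  shows "3*l \<le> hamming_weight (3*l) (eval_word A B) + 3*t + 1"
  using card_zeros_le[of A B] hamming_weight_add_card_zeros[of "3*l" "eval_word A B"]
    eval_word_eq_zero_iff assms by fastforce

lemma linear_code_code: "linear_code (3*l) code"
  unfolding linear_code_def
proof
  show "code \<subseteq> ambient (3*l)"
    by (auto simp: code_def ambient_def eval_word_def)
  have "0 \<in> code"
    using eval_word_in_code[of 0 0] t_pos by simp
  moreover have "v + w \<in> code" if "v \<in> code" "w \<in> code" for v w
    using that unfolding code_def
    by (force simp flip: eval_word_add intro: order.trans[OF degree_add_le_max] degree_add_less)
  moreover have "coord_scale c v \<in> code" if "v \<in> code" for c v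
    using that unfolding code_def
    by (force simp flip: eval_word_smult
        intro: order.trans[OF degree_smult_le] le_less_trans[OF degree_smult_le])
  ultimately show "module.subspace coord_scale code"
    unfolding coords.subspace_def by blast
qed

abbreviation monomial_index :: "(nat + nat) set" where
  "monomial_index \<equiv> Sum_Type.Plus {..t} {..<t}"

definition basis_word :: "nat + nat \<Rightarrow> nat \<Rightarrow> 'a" where
  "basis_word = case_sum (\<lambda>k. eval_word (monom 1 k) 0) (\<lambda>k. eval_word 0 (monom 1 k))"

lemma sum_basis_word:
  "(\<Sum>i\<in>monomial_index. coord_scale (w i) (basis_word i)) =
     eval_word (\<Sum>k\<le>t. monom (w (Inl k)) k) (\<Sum>k<t. monom (w (Inr k)) k)"
  by (simp add: fun_eq_iff sum_fun_apply sum.Plus coord_scale_def basis_word_def eval_word_def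
      poly_sum poly_monom sum_distrib_left mult_ac)

lemma code_eq_span: "code = coords.span (basis_word ` monomial_index)"
proof
  show "code \<subseteq> coords.span (basis_word ` monomial_index)"
  proof
    fix v assume "v \<in> code"
    then obtain A B where AB: "degree A \<le> t" "degree B < t" "v = eval_word A B"
      unfolding code_def by blast
    have "(\<Sum>k<t. monom (coeff B k) k) = B"
      using poly_as_sum_of_monoms'[of B "t - 1"] AB(2) t_pos
      by (simp add: lessThan_Suc_atMost [symmetric])
    then have "v = (\<Sum>i\<in>monomial_index. coord_scale (case_sum (coeff A) (coeff B) i) (basis_word i))"
      using AB by (simp add: sum_basis_word poly_as_sum_of_monoms')
    then show "v \<in> coords.span (basis_word ` monomial_index)"
      by (simp add: coords.span_sum coords.span_scale coords.span_base)
  qed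
  have "basis_word i \<in> code" if "i \<in> monomial_index" for i
    using that t_pos by (auto simp: basis_word_def degree_monom_eq intro!: eval_word_in_code)
  then show "coords.span (basis_word ` monomial_index) \<subseteq> code"
    using linear_code_code unfolding linear_code_def by (intro coords.span_minimal) auto
qed

lemma independent_basis_word:
  "coords.independent (basis_word ` monomial_index)" "inj_on basis_word monomial_index"
proof -
  have "\<forall>i\<in>monomial_index. w i = 0"
    if "(\<Sum>i\<in>monomial_index. coord_scale (w i) (basis_word i)) = 0" for w
  proof -
    have "degree (\<Sum>k\<le>t. monom (w (Inl k)) k) \<le> t" "degree (\<Sum>k<t. monom (w (Inr k)) k) < t"
      using t_pos by (auto intro!: degree_sum_le degree_sum_less
          intro: order.trans[OF degree_monom_le] le_less_trans[OF degree_monom_le])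
    with that have "(\<Sum>k\<le>t. monom (w (Inl k)) k) = 0" "(\<Sum>k<t. monom (w (Inr k)) k) = 0"
      by (simp_all add: sum_basis_word eval_word_eq_zero_iff)
    then have coeffs:
        "coeff (\<Sum>k\<le>t. monom (w (Inl k)) k) k = 0" "coeff (\<Sum>k<t. monom (w (Inr k)) k) k = 0" for k
      by simp_all
    have "w (Inl k) = 0" if "k \<le> t" for k
      using coeffs(1)[of k] that by (simp add: coeff_sum)
    moreover have "w (Inr k) = 0" if "k < t" for k
      using coeffs(2)[of k] that by (simp add: coeff_sum)
    ultimately show ?thesis
      by blast
  qed
  then show "coords.independent (basis_word ` monomial_index)" "inj_on basis_word monomial_index"
    using coords.independent_image_if_combinations_vanish[of "monomial_index" basis_word]
    by (simp_all add: finite_Plus)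
qed

lemma code_dim_code: "code_dim code = 2*t + 1"
  using independent_basis_word
  by (simp add: code_dim_def code_eq_span coords.dim_eq_card_independent card_image card_Plus)

lemma has_locality_code: "has_locality (3*l) code 2"
proof (rule has_localityI)
  show "module.subspace coord_scale code"
    using linear_code_code by (simp add: linear_code_def)
next
  fix i assume "i < 3*l"
  define j where "j = i div 3"
  define I where "I = {3*j..<3*j+3} - {i}"
  have "j < l"
    using \<open>i < 3*l\<close> by (simp add: j_def less_mult_imp_div_less)
  have fibre: "i' div 3 = j" if "i' \<in> {3*j..<3*j+3}" for i'
    using that by (intro div_nat_eqI) simp_all
  have "i \<in> {3*j..<3*j+3}"
    unfolding atLeastLessThan_iff j_def using div_mult_mod_eq[of i 3] mod_less_divisor[of 3 i]
    by linarith
  then have "card I = 2"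
    by (simp add: I_def)
  moreover have "I \<subseteq> {..<3*l} - {i}"
    using \<open>j < l\<close> by (auto simp: I_def)
  moreover have "c i = 0" if "c \<in> code" "\<forall>i'\<in>I. c i' = 0" for c
  proof -
    obtain A B where c: "c = eval_word A B"
      using \<open>c \<in> code\<close> unfolding code_def by blast
    obtain i1 i2 where "I = {i1, i2}" "i1 \<noteq> i2"
      using card_2_iff[THEN iffD1, OF \<open>card I = 2\<close>] by blast
    then have "i1 \<in> I" "i2 \<in> I"
      by auto
    then have "i1 < 3*l" "i2 < 3*l" "i1 div 3 = j" "i2 div 3 = j"
      using fibre \<open>I \<subseteq> {..<3*l} - {i}\<close> by (auto simp: I_def)
    moreover have "eval_word A B i1 = 0" "eval_word A B i2 = 0"
      using that(2) \<open>i1 \<in> I\<close> \<open>i2 \<in> I\<close> by (simp_all add: c)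
    ultimately have "poly A (s j) = 0 \<and> poly B (s j) = 0"
      using eval_word_zeros_in_fibre[of i1 i2 A B] \<open>i1 \<noteq> i2\<close> by simp
    then show "c i = 0"
      using \<open>i < 3*l\<close> by (simp add: c eval_word_def j_def)
  qed
  ultimately show "\<exists>I. I \<subseteq> {..<3*l} - {i} \<and> card I = 2 \<and>
      (\<forall>c\<in>code. (\<forall>j\<in>I. c j = 0) \<longrightarrow> c i = 0)"
    by blast
qed

lemma min_dist_code_ge: "3*l \<le> min_dist (3*l) code + 3*t + 1"
proof -
  have "eval_word 1 0 \<in> code"
    using t_pos by (simp add: eval_word_in_code)
  moreover have "eval_word 1 0 \<noteq> 0"
    using t_pos by (simp add: eval_word_eq_zero_iff)
  moreover have "3*l - (3*t + 1) \<le> hamming_weight (3*l) c" if "c \<in> code" "c \<noteq> 0" for c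
    using that hamming_weight_eval_word_ge unfolding code_def by fastforce
  ultimately have "3*l - (3*t + 1) \<le> min_dist (3*l) code"
    by (rule le_min_distI)
  then show ?thesis by linarith
qed

end

lemma ex_cubic_cover_code:
  fixes \<tau> \<omega> :: "'a::{field,finite}"
  assumes two: "(2::'a) \<noteq> 0" and tau: "\<tau> \<noteq> 1/4"
    and \<omega>: "\<omega> \<noteq> 1" "\<omega> ^ 3 = 1"
    and "1 \<le> t" "t < l" and "l \<le> card (cube_conic_points \<tau>)"
  shows "\<exists>s x. cubic_cover_code \<tau> l t s x"
proof -
  obtain g where g: "g ` {..<l} \<subseteq> cube_conic_points \<tau>" "inj_on g {..<l}"
    using card_le_inj[of "{..<l}" "cube_conic_points \<tau>"] assms(7) by auto
  define u b where "u j = fst (g j)" and "b j = snd (g j)" for j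
  have "(u j, b j) \<in> cube_conic_points \<tau>" if "j < l" for j
    using g(1) that by (auto simp: u_def b_def)
  then have on_conic: "u j \<noteq> 0" "\<exists>a. a ^ 3 = u j" "b j ^ 2 = u j ^ 2 + u j + \<tau>"
    if "j < l" for j
    using that by (simp_all add: cube_conic_points_def)
  define a where "a j = (SOME a. a ^ 3 = u j)" for j
  have a: "a j ^ 3 = u j" "a j \<noteq> 0" if "j < l" for j
    using someI_ex[OF on_conic(2)[OF that]] on_conic(1)[OF that] by (auto simp: a_def)
  define s where "s j = b j + u j" for j
  define x where "x i = \<omega> ^ (i mod 3) * a (i div 3)" for i
  have "cubic_cover_code \<tau> l t s x"
  proof
    show "inj_on s {..<l}"
    proof (rule inj_onI)
      fix j j' assume "j \<in> {..<l}" "j' \<in> {..<l}" "s j = s j'"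
      then have "g j = g j'"
        using conic_point_eq_if_sum_eq[OF two tau on_conic(3) on_conic(3)]
        by (simp add: s_def u_def b_def prod_eq_iff)
      with g(2) \<open>j \<in> {..<l}\<close> \<open>j' \<in> {..<l}\<close> show "j = j'"
        by (simp add: inj_on_eq_iff)
    qed
  next
    fix i i' assume "i < 3*l" "i' < 3*l" "i div 3 = i' div 3" "x i = x i'"
    then have "\<omega> ^ (i mod 3) = \<omega> ^ (i' mod 3)"
      using a(2)[of "i div 3"] by (simp add: x_def less_mult_imp_div_less)
    then have "i mod 3 = i' mod 3"
      using inj_on_power_cube_root_of_unity[OF \<omega>] by (auto dest: inj_onD)
    with \<open>i div 3 = i' div 3\<close> show "i = i'"
      by (metis div_mult_mod_eq)
  next
    fix i assume "i < 3*l"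
    then have j: "i div 3 < l"
      by (simp add: less_mult_imp_div_less)
    have "x i ^ 3 = (\<omega> ^ 3) ^ (i mod 3) * a (i div 3) ^ 3"
      by (simp add: x_def power_mult_distrib flip: power_mult, simp add: mult.commute)
    then have "x i ^ 3 = u (i div 3)"
      using \<omega>(2) a(1)[OF j] by simp
    then show "x i ^ 3 * (2 * s (i div 3) + 1) = s (i div 3) ^ 2 - \<tau>"
      using conic_sum_coordinate[OF on_conic(3)[OF j]] by (simp add: s_def)
  qed (use assms in auto)
  then show ?thesis by blast
qed

theorem mainTheorem10:
  fixes \<tau> :: "'a::{field,finite}"
    and p m :: nat and t l :: nat
  assumes "prime p" and "odd p" and "p \<noteq> 3" and "m \<ge> 1"
    and "card (UNIV :: 'a set) = p ^ m"
    and "3 dvd (card (UNIV :: 'a set) - 1)"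
    and "\<tau> \<noteq> 0" and "\<tau> \<noteq> 1/4" and "\<tau> \<noteq> -1/50"
    and "1 \<le> t" and "t < l" and "l + 1 \<le> num_rat_places \<tau> div 3"
  shows "\<exists>C :: (nat \<Rightarrow> 'a) set.
           linear_code (3*l) C \<and> code_dim C = 2*t+1 \<and> has_locality (3*l) C 2 \<and>
           int (min_dist (3*l) C) \<ge> int (3*l) - 3 * int t - 1 \<and>
           singleton_defect (3*l) (2*t+1) (min_dist (3*l) C) 2 \<le> 1"
proof -
  (* Of the hypotheses on p, m and \<tau> only odd q, 3 | q - 1 and \<tau> \<noteq> 1/4 are used: p \<noteq> 3
     follows from 3 | q - 1, and \<tau> \<noteq> 0, -1/50 concern the geometry of the curve, which
     enters here only through the point count num_rat_places. *)
  have two: "(2::'a) \<noteq> 0"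
    using assms(2,5) by (intro two_neq_zero_if_odd_card) simp
  obtain \<omega> :: 'a where \<omega>: "\<omega> \<noteq> 1" "\<omega> ^ 3 = 1"
    using ex_nontrivial_root_of_unity[OF assms(6)] by auto
  have "l \<le> card (cube_conic_points \<tau>)"
    using num_rat_places_le[of \<tau>] assms(12) by linarith
  then obtain s x where "cubic_cover_code \<tau> l t s x"
    using ex_cubic_cover_code[OF two assms(8) \<omega> assms(10,11)] by blast
  then interpret cubic_cover_code \<tau> l t s x .
  have "int (3*l) - 3 * int t - 1 \<le> int (min_dist (3*l) code)"
    using min_dist_code_ge by linarith
  moreover have "singleton_defect (3*l) (2*t+1) (min_dist (3*l) code) 2 \<le> 1"
    using min_dist_code_ge by (intro singleton_defect_le_one) linarith
  ultimately show ?thesis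
    using linear_code_code code_dim_code has_locality_code by blast
qed

end
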